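(* Let $p\in(0,1)$, $\gamma>0$, $B>0$, $w\in\mathbb{N}$, and for each $N\in\mathbb{N}$ let $(\xi_j^{(N)*})_{j=1}^N$ be the unique maximizer of $\mathcal{T}_N$. Let $(\xi_j^* )_{j\ge1}$ be the unique maximizer of $\mathcal{T}_\infty$ over admissible sequences. Then for every fixed $j\in\mathbb{N}$, the limit $\lim_{N\to\infty}\xi_j^{(N)*}$ exists and equals $\xi_j^*$.
   Context: Logarithms are base 2. A nonnegative sequence $(x_j)_{j\ge1}$ is admissible if $\sum_j x_j\le B$. For an admissible sequence, $$\mathcal{T}_\infty(x_1,x_2,\dots)=\sum_{k=1}^{w}p^2(1-p)^{k-1}\frac{k}{2}\log_2\!\Big(1+\gamma\frac{B}{k}\Big)+\sum_{j=1}^{\infty}p(1-p)^{j+w-1}\frac12\log_2(1+\gamma x_j)+\sum_{k=1}^{\infty}p^2(1-p)^{k+w-1}\frac{w}{2}\log_2\!\Big(1+\gamma\frac{B-\sum_{j=1}^{k}x_j}{w}\Big).$$ The paper takes as given that $\mathcal{T}_\infty$ has a unique maximizer over admissible sequences. For $N\in\mathbb{N}$ and $\xi_1,\dots,\xi_N\ge0$ with $\sum_{j=1}^N\xi_j\le B$, define $\mathcal{T}_N(\xi_1,\dots,\xi_N)=\mathcal{T}_\infty(\xi_1,\dots,\xi_N,0,0,\dots)$. $\mathcal{T}_N$ has a unique maximizer over this compact set, denoted $(\xi_j^{(N)*})_{j=1}^N$. *)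

theory Defs
  imports "HOL-Analysis.Analysis"
begin

text \<open>Sequences are functions nat => real indexed from 1; the value at index 0 is ignored.
  Logarithms are base 2.\<close>

definition admissible :: "real \<Rightarrow> (nat \<Rightarrow> real) \<Rightarrow> bool" where
  "admissible B x \<longleftrightarrow> (\<forall>j\<ge>1. 0 \<le> x j) \<and> (\<forall>n. (\<Sum>j=1..n. x j) \<le> B)"

definition Tinf :: "real \<Rightarrow> real \<Rightarrow> real \<Rightarrow> nat \<Rightarrow> (nat \<Rightarrow> real) \<Rightarrow> real" where
  "Tinf p \<gamma> B w x =
     (\<Sum>k=1..w. p^2 * (1-p)^(k-1) * (real k / 2) * log 2 (1 + \<gamma> * B / real k))
   + (\<Sum>j. p * (1-p)^(j + w) * (1/2) * log 2 (1 + \<gamma> * x (Suc j)))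
   + (\<Sum>k. p^2 * (1-p)^(k + w) * (real w / 2)
            * log 2 (1 + \<gamma> * (B - (\<Sum>i=1..Suc k. x i)) / real w))"

definition feasibleN :: "real \<Rightarrow> nat \<Rightarrow> (nat \<Rightarrow> real) \<Rightarrow> bool" where
  "feasibleN B N \<xi> \<longleftrightarrow> (\<forall>j\<in>{1..N}. 0 \<le> \<xi> j) \<and> (\<Sum>j=1..N. \<xi> j) \<le> B"

definition TN :: "real \<Rightarrow> real \<Rightarrow> real \<Rightarrow> nat \<Rightarrow> nat \<Rightarrow> (nat \<Rightarrow> real) \<Rightarrow> real" where
  "TN p \<gamma> B w N \<xi> = Tinf p \<gamma> B w (\<lambda>j. if j \<le> N then \<xi> j else 0)"

end

theory Submission
  imports Defs
begin

text \<open>The objective is strongly concave along segments: for admissible \<open>x\<close>, \<open>y\<close> with midpoint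
  \<open>m\<close>, every summand of \<open>2 Tinf m - Tinf x - Tinf y\<close> is nonnegative, and the one at index
  \<open>j\<close> is at least a positive multiple of \<open>log (1 + \<kappa>\<^sup>2 (x\<^sub>j - y\<^sub>j)\<^sup>2)\<close>.
  Applied to \<open>\<xi>\<^sup>*\<close> and the zero-extended \<open>N\<close>-th maximizer \<open>y\<^sub>N\<close>, maximality of \<open>\<xi>\<^sup>*\<close> bounds
  this by \<open>Tinf \<xi>\<^sup>* - Tinf y\<^sub>N\<close>, and maximality of \<open>y\<^sub>N\<close> bounds that by
  \<open>Tinf \<xi>\<^sup>* - Tinf (\<xi>\<^sup>* truncated at N)\<close>, which tends to 0 by dominated convergence of the two
  series.\<close>

definition Tinf_head :: "real \<Rightarrow> real \<Rightarrow> real \<Rightarrow> nat \<Rightarrow> real" where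
  "Tinf_head p \<gamma> B w =
     (\<Sum>k=1..w. p^2 * (1-p)^(k-1) * (real k / 2) * log 2 (1 + \<gamma> * B / real k))"

definition rate_term :: "real \<Rightarrow> real \<Rightarrow> nat \<Rightarrow> (nat \<Rightarrow> real) \<Rightarrow> nat \<Rightarrow> real" where
  "rate_term p \<gamma> w x j = p * (1-p)^(j + w) * (1/2) * log 2 (1 + \<gamma> * x (Suc j))"

definition residual_term :: "real \<Rightarrow> real \<Rightarrow> real \<Rightarrow> nat \<Rightarrow> (nat \<Rightarrow> real) \<Rightarrow> nat \<Rightarrow> real" where
  "residual_term p \<gamma> B w x k = p^2 * (1-p)^(k + w) * (real w / 2)
     * log 2 (1 + \<gamma> * (B - (\<Sum>i=1..Suc k. x i)) / real w)"

lemma Tinf_eq_terms: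
  "Tinf p \<gamma> B w x = Tinf_head p \<gamma> B w + suminf (rate_term p \<gamma> w x) + suminf (residual_term p \<gamma> B w x)"
  unfolding Tinf_def Tinf_head_def rate_term_def residual_term_def by simp

lemma admissible_nonneg: "admissible B x \<Longrightarrow> 1 \<le> i \<Longrightarrow> 0 \<le> x i"
  unfolding admissible_def by auto

lemma admissible_le_budget:
  assumes "admissible B x" "1 \<le> i"
  shows "x i \<le> B"
proof -
  have "x i \<le> (\<Sum>j=1..i. x j)"
    by (rule member_le_sum) (use assms in \<open>auto simp: admissible_def\<close>)
  also have "\<dots> \<le> B" using assms unfolding admissible_def by auto
  finally show ?thesis .
qed

lemma admissible_residual_bounds:
  assumes "admissible B x"
  shows "0 \<le> B - (\<Sum>i=1..n. x i)" "B - (\<Sum>i=1..n. x i) \<le> B"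
proof -
  show "0 \<le> B - (\<Sum>i=1..n. x i)" using assms unfolding admissible_def by auto
  have "0 \<le> (\<Sum>i=1..n. x i)" by (rule sum_nonneg) (use assms in \<open>auto simp: admissible_def\<close>)
  then show "B - (\<Sum>i=1..n. x i) \<le> B" by simp
qed

lemma admissible_imp_feasibleN: "admissible B x \<Longrightarrow> feasibleN B N x"
  unfolding admissible_def feasibleN_def by auto

lemma feasibleN_imp_admissible_truncation:
  assumes "feasibleN B N \<xi>"
  shows "admissible B (\<lambda>i. if i \<le> N then \<xi> i else 0)"
  unfolding admissible_def
proof (intro conjI allI impI)
  have nonneg: "\<forall>j\<in>{1..N}. 0 \<le> \<xi> j" and budget: "(\<Sum>j=1..N. \<xi> j) \<le> B"
    using assms by (auto simp: feasibleN_def)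
  fix n
  have "(\<Sum>i=1..n. (if i \<le> N then \<xi> i else 0)) = (\<Sum>i\<in>{1..n} \<inter> {i. i \<le> N}. \<xi> i)"
    by (simp add: sum.If_cases)
  also have "\<dots> \<le> (\<Sum>i=1..N. \<xi> i)"
    by (rule sum_mono2) (use nonneg in auto)
  finally show "(\<Sum>i=1..n. (if i \<le> N then \<xi> i else 0)) \<le> B" using budget by simp
qed (use assms in \<open>auto simp: feasibleN_def\<close>)

lemma admissible_midpoint:
  assumes "admissible B x" "admissible B y"
  shows "admissible B (\<lambda>i. (x i + y i)/2)"
  unfolding admissible_def
proof (intro conjI allI impI)
  fix n
  have "sum x {1..n} \<le> B" "sum y {1..n} \<le> B" using assms unfolding admissible_def by auto
  moreover have "(\<Sum>i=1..n. (x i + y i)/2) = (sum x {1..n} + sum y {1..n})/2"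
    by (simp only: sum_divide_distrib[symmetric] sum.distrib)
  ultimately show "(\<Sum>i=1..n. (x i + y i)/2) \<le> B" by simp
qed (use assms in \<open>auto simp: admissible_def\<close>)

subsection \<open>Strong concavity of the logarithm on a bounded interval\<close>

lemma log_one_plus_bounds:
  assumes "0 \<le> t" "t \<le> K" "0 < q"
  shows "0 \<le> log 2 (1 + q*t)" "log 2 (1 + q*t) \<le> log 2 (1 + q*K)"
proof -
  have "0 \<le> q*t" using assms by simp
  then show "0 \<le> log 2 (1 + q*t)" by simp
  show "log 2 (1 + q*t) \<le> log 2 (1 + q*K)"
    using assms \<open>0 \<le> q*t\<close> by (intro log_mono) (auto intro!: mult_left_mono simp: add_pos_nonneg)
qed

lemma log_one_plus_square_nonneg: "0 \<le> log 2 (1 + t^2)"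
  by (simp add: add_pos_nonneg)

text \<open>With \<open>P = (1+qa)(1+qb) \<le> (1+qK)\<^sup>2\<close>, the identity \<open>P + q\<^sup>2(a-b)\<^sup>2/4 = (1+q(a+b)/2)\<^sup>2\<close>
  gives \<open>P (1 + q\<^sup>2(a-b)\<^sup>2/(4(1+qK)\<^sup>2)) \<le> (1+q(a+b)/2)\<^sup>2\<close>.\<close>

lemma log_one_plus_midpoint_strong:
  fixes q a b K :: real
  assumes "0 \<le> a" "0 \<le> b" "a \<le> K" "b \<le> K" "0 < q"
  shows "log 2 (1+q*a) + log 2 (1+q*b) + log 2 (1 + (q*(a-b) / (2*(1+q*K)))^2)
         \<le> 2 * log 2 (1+q*((a+b)/2))"
proof -
  define P where "P = (1+q*a)*(1+q*b)"
  define R where "R = (1+q*K)^2"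
  define D where "D = q^2*(a-b)^2"
  have P_pos: "0 < P" unfolding P_def using assms by (simp add: add_pos_nonneg)
  have P_le_R: "P \<le> R" unfolding P_def R_def power2_eq_square
    using assms by (intro mult_mono) (auto simp: mult_left_mono)
  have R_pos: "0 < R" using P_pos P_le_R by simp
  have D_nonneg: "0 \<le> D" unfolding D_def by simp
  have gain_eq: "(q*(a-b) / (2*(1+q*K)))^2 = D/(4*R)"
    unfolding D_def R_def power_divide power_mult_distrib by simp
  have "P * (D/(4*R)) \<le> D/4" using P_le_R R_pos D_nonneg P_pos
    by (simp add: field_simps mult_left_mono)
  then have "P * (1 + D/(4*R)) \<le> P + D/4" by (simp add: algebra_simps)
  also have "P + D/4 = (1+q*((a+b)/2))^2" unfolding P_def D_def by (simp add: field_simps power2_eq_square)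
  finally have main: "P * (1 + D/(4*R)) \<le> (1+q*((a+b)/2))^2" .
  have gain_pos: "0 < 1 + D/(4*R)" using D_nonneg R_pos by (simp add: add_pos_nonneg)
  have "log 2 (1+q*a) + log 2 (1+q*b) + log 2 (1 + D/(4*R)) = log 2 (P * (1 + D/(4*R)))"
  proof -
    have "0 < 1+q*a" "0 < 1+q*b" using assms by (auto intro: add_pos_nonneg)
    then show ?thesis unfolding P_def using gain_pos by (simp add: log_mult)
  qed
  also have "\<dots> \<le> log 2 ((1+q*((a+b)/2))^2)"
    using main P_pos gain_pos by (intro log_mono) auto
  also have "\<dots> = 2 * log 2 (1+q*((a+b)/2))"
    using assms by (subst log_nat_power) (auto simp: add_pos_nonneg)
  finally show ?thesis unfolding gain_eq .
qed

lemma rate_term_bounds: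
  assumes "0 < p" "p < 1" "0 < \<gamma>" "admissible B x"
  shows "0 \<le> rate_term p \<gamma> w x j"
    "rate_term p \<gamma> w x j \<le> (1-p)^j * (p*(1-p)^w/2 * log 2 (1+\<gamma>*B))"
proof -
  have "0 \<le> x (Suc j)" "x (Suc j) \<le> B"
    using assms(4) by (auto intro: admissible_nonneg admissible_le_budget)
  note log_bounds = log_one_plus_bounds[OF this assms(3)]
  have weight: "0 \<le> p * (1-p)^(j + w) * (1/2)" using assms by auto
  show "0 \<le> rate_term p \<gamma> w x j" unfolding rate_term_def using weight log_bounds by simp
  have "rate_term p \<gamma> w x j \<le> p * (1-p)^(j + w) * (1/2) * log 2 (1+\<gamma>*B)"
    unfolding rate_term_def using weight log_bounds by (intro mult_left_mono) auto
  also have "\<dots> = (1-p)^j * (p*(1-p)^w/2 * log 2 (1+\<gamma>*B))" by (simp add: power_add)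
  finally show "rate_term p \<gamma> w x j \<le> (1-p)^j * (p*(1-p)^w/2 * log 2 (1+\<gamma>*B))" .
qed

lemma residual_term_bounds:
  assumes "0 < p" "p < 1" "0 < \<gamma>" "1 \<le> w" "admissible B x"
  shows "0 \<le> residual_term p \<gamma> B w x k"
    "residual_term p \<gamma> B w x k \<le> (1-p)^k * (p^2*(1-p)^w*(real w/2) * log 2 (1+\<gamma>*B))"
proof -
  define r where "r = B - (\<Sum>i=1..Suc k. x i)"
  have r: "0 \<le> r" "r \<le> B" unfolding r_def by (rule admissible_residual_bounds[OF assms(5)])+
  have q: "0 < \<gamma> / real w" using assms by auto
  have "\<gamma> / real w * B \<le> \<gamma> * B" using assms r by (intro mult_right_mono) (auto simp: field_simps)
  moreover have "0 \<le> \<gamma> / real w * B" using q r by (intro mult_nonneg_nonneg) auto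
  ultimately have "log 2 (1 + \<gamma> / real w * B) \<le> log 2 (1 + \<gamma> * B)"
    by (intro log_mono) auto
  with log_one_plus_bounds[OF r q]
  have log_bounds: "0 \<le> log 2 (1 + \<gamma> * r / real w)" "log 2 (1 + \<gamma> * r / real w) \<le> log 2 (1+\<gamma>*B)"
    by auto
  have weight: "0 \<le> p^2 * (1-p)^(k + w) * (real w / 2)" using assms by auto
  show "0 \<le> residual_term p \<gamma> B w x k"
    unfolding residual_term_def r_def[symmetric] using weight log_bounds by simp
  have "residual_term p \<gamma> B w x k \<le> p^2 * (1-p)^(k + w) * (real w / 2) * log 2 (1+\<gamma>*B)"
    unfolding residual_term_def r_def[symmetric] using weight log_bounds by (intro mult_left_mono) auto
  also have "\<dots> = (1-p)^k * (p^2*(1-p)^w*(real w/2) * log 2 (1+\<gamma>*B))" by (simp add: power_add)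
  finally show "residual_term p \<gamma> B w x k \<le> (1-p)^k * (p^2*(1-p)^w*(real w/2) * log 2 (1+\<gamma>*B))" .
qed

lemma summable_geometric_majorant:
  fixes f :: "nat \<Rightarrow> real"
  assumes "\<And>k. 0 \<le> f k" "\<And>k. f k \<le> r^k * M" "0 \<le> r" "r < 1"
  shows "summable f"
  by (rule summable_comparison_test'[of "\<lambda>k. r^k * M" 0])
    (use assms in \<open>auto intro!: summable_mult2 summable_geometric\<close>)

lemma summable_rate_term:
  assumes "0 < p" "p < 1" "0 < \<gamma>" "admissible B x"
  shows "summable (rate_term p \<gamma> w x)"
  by (rule summable_geometric_majorant[OF rate_term_bounds[OF assms]]) (use assms in auto)

lemma summable_residual_term:
  assumes "0 < p" "p < 1" "0 < \<gamma>" "1 \<le> w" "admissible B x"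
  shows "summable (residual_term p \<gamma> B w x)"
  by (rule summable_geometric_majorant[OF residual_term_bounds[OF assms]]) (use assms in auto)

lemma rate_term_midpoint:
  assumes "0 < p" "p < 1" "0 < \<gamma>" "admissible B x" "admissible B y"
  shows "rate_term p \<gamma> w x j + rate_term p \<gamma> w y j
      + p * (1-p)^(j + w) * (1/2) * log 2 (1 + (\<gamma>*(x (Suc j) - y (Suc j)) / (2*(1+\<gamma>*B)))^2)
    \<le> 2 * rate_term p \<gamma> w (\<lambda>i. (x i + y i)/2) j"
proof -
  have "log 2 (1+\<gamma>*x (Suc j)) + log 2 (1+\<gamma>*y (Suc j))
      + log 2 (1 + (\<gamma>*(x (Suc j) - y (Suc j)) / (2*(1+\<gamma>*B)))^2)
    \<le> 2 * log 2 (1+\<gamma>*((x (Suc j)+y (Suc j))/2))"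
    using assms by (intro log_one_plus_midpoint_strong) (auto intro: admissible_nonneg admissible_le_budget)
  moreover have "0 \<le> p * (1-p)^(j + w) * (1/2)" using assms by auto
  ultimately have "p * (1-p)^(j + w) * (1/2) * (log 2 (1+\<gamma>*x (Suc j)) + log 2 (1+\<gamma>*y (Suc j))
      + log 2 (1 + (\<gamma>*(x (Suc j) - y (Suc j)) / (2*(1+\<gamma>*B)))^2))
    \<le> p * (1-p)^(j + w) * (1/2) * (2 * log 2 (1+\<gamma>*((x (Suc j)+y (Suc j))/2)))"
    by (rule mult_left_mono)
  then show ?thesis unfolding rate_term_def by (simp add: algebra_simps)
qed

lemma residual_term_midpoint:
  assumes "0 < p" "p < 1" "0 < \<gamma>" "1 \<le> w" "admissible B x" "admissible B y"
  shows "residual_term p \<gamma> B w x k + residual_term p \<gamma> B w y k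
    \<le> 2 * residual_term p \<gamma> B w (\<lambda>i. (x i + y i)/2) k"
proof -
  define a where "a = B - (\<Sum>i=1..Suc k. x i)"
  define b where "b = B - (\<Sum>i=1..Suc k. y i)"
  define q where "q = \<gamma> / real w"
  have ab: "0 \<le> a" "a \<le> B" "0 \<le> b" "b \<le> B" unfolding a_def b_def
    by (rule admissible_residual_bounds[OF assms(5)] admissible_residual_bounds[OF assms(6)])+
  have mid: "B - (\<Sum>i=1..Suc k. (x i + y i)/2) = (a+b)/2" unfolding a_def b_def
    by (simp add: sum_divide_distrib[symmetric] sum.distrib field_simps)
  have "0 < q" unfolding q_def using assms by auto
  have "log 2 (1+q*a) + log 2 (1+q*b) \<le> 2 * log 2 (1+q*((a+b)/2))"
    using log_one_plus_midpoint_strong[OF ab(1,3,2,4) \<open>0 < q\<close>]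
      log_one_plus_square_nonneg[of "q*(a-b) / (2*(1+q*B))"] by linarith
  moreover have "0 \<le> p^2 * (1-p)^(k + w) * (real w / 2)" using assms by auto
  ultimately have "p^2 * (1-p)^(k + w) * (real w / 2) * (log 2 (1+q*a) + log 2 (1+q*b))
      \<le> p^2 * (1-p)^(k + w) * (real w / 2) * (2 * log 2 (1+q*((a+b)/2)))"
    by (rule mult_left_mono)
  moreover have scale: "\<gamma> * t / real w = q * t" for t unfolding q_def by simp
  ultimately show ?thesis
    unfolding residual_term_def mid a_def[symmetric] b_def[symmetric] scale by (simp add: algebra_simps)
qed

lemma Tinf_midpoint_strong:
  assumes "0 < p" "p < 1" "0 < \<gamma>" "1 \<le> w" "admissible B x" "admissible B y"
  shows "Tinf p \<gamma> B w x + Tinf p \<gamma> B w y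
      + p * (1-p)^(n + w) * (1/2) * log 2 (1 + (\<gamma>*(x (Suc n) - y (Suc n)) / (2*(1+\<gamma>*B)))^2)
    \<le> 2 * Tinf p \<gamma> B w (\<lambda>i. (x i + y i)/2)"
proof -
  define m where "m = (\<lambda>i. (x i + y i)/2)"
  define gain where "gain j = p * (1-p)^(j + w) * (1/2)
      * log 2 (1 + (\<gamma>*(x (Suc j) - y (Suc j)) / (2*(1+\<gamma>*B)))^2)" for j
  have m: "admissible B m" unfolding m_def by (rule admissible_midpoint[OF assms(5,6)])
  have gain_nonneg: "0 \<le> gain j" for j
    unfolding gain_def using assms log_one_plus_square_nonneg by auto
  have rate: "suminf (rate_term p \<gamma> w x) + suminf (rate_term p \<gamma> w y) + gain n
      \<le> 2 * suminf (rate_term p \<gamma> w m)"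
  proof (rule sums_le)
    show "(\<lambda>j. rate_term p \<gamma> w x j + rate_term p \<gamma> w y j + (if j = n then gain j else 0)) sums
        (suminf (rate_term p \<gamma> w x) + suminf (rate_term p \<gamma> w y) + gain n)"
      using assms by (intro sums_add summable_sums summable_rate_term sums_single)
    show "(\<lambda>j. 2 * rate_term p \<gamma> w m j) sums (2 * suminf (rate_term p \<gamma> w m))"
      using assms m by (intro sums_mult summable_sums summable_rate_term)
    fix j
    show "rate_term p \<gamma> w x j + rate_term p \<gamma> w y j + (if j = n then gain j else 0)
        \<le> 2 * rate_term p \<gamma> w m j"
      using rate_term_midpoint[OF assms(1-3,5,6), of w j] gain_nonneg[of j]
      unfolding gain_def m_def by (auto split: if_splits)
  qed
  have residual: "suminf (residual_term p \<gamma> B w x) + suminf (residual_term p \<gamma> B w y)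
      \<le> 2 * suminf (residual_term p \<gamma> B w m)"
  proof (rule sums_le)
    show "(\<lambda>k. residual_term p \<gamma> B w x k + residual_term p \<gamma> B w y k) sums
        (suminf (residual_term p \<gamma> B w x) + suminf (residual_term p \<gamma> B w y))"
      using assms by (intro sums_add summable_sums summable_residual_term)
    show "(\<lambda>k. 2 * residual_term p \<gamma> B w m k) sums (2 * suminf (residual_term p \<gamma> B w m))"
      using assms m by (intro sums_mult summable_sums summable_residual_term)
  qed (unfold m_def, rule residual_term_midpoint[OF assms])
  show ?thesis
    using rate residual unfolding Tinf_eq_terms m_def[symmetric] gain_def by simp
qed

lemma Tinf_maximizer_gap:
  assumes "0 < p" "p < 1" "0 < \<gamma>" "1 \<le> w" "admissible B x" "admissible B y"
    and max: "\<And>z. admissible B z \<Longrightarrow> Tinf p \<gamma> B w z \<le> Tinf p \<gamma> B w x"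
  shows "p * (1-p)^(n + w) * (1/2) * log 2 (1 + (\<gamma>*(x (Suc n) - y (Suc n)) / (2*(1+\<gamma>*B)))^2)
    \<le> Tinf p \<gamma> B w x - Tinf p \<gamma> B w y"
  using Tinf_midpoint_strong[OF assms(1-6), of n] max[OF admissible_midpoint[OF assms(5,6)]]
  by linarith

subsection \<open>Truncation\<close>

lemma tendsto_suminf_eventually_eq:
  fixes f :: "nat \<Rightarrow> nat \<Rightarrow> real"
  assumes "\<And>k. eventually (\<lambda>n. f n k = g k) sequentially"
    and "\<And>n k. \<bar>f n k\<bar> \<le> M k" "summable M"
  shows "(\<lambda>n. suminf (f n)) \<longlonglongrightarrow> suminf g"
proof -
  have "eventually (\<lambda>n. summable (\<lambda>k. norm (f n k))) sequentially \<and>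
      summable (\<lambda>k. norm (g k)) \<and> ((\<lambda>n. suminf (\<lambda>k. f n k)) \<longlongrightarrow> suminf g) sequentially"
  proof (rule tannerys_theorem)
    show "(\<lambda>n. f n k) \<longlonglongrightarrow> g k" for k by (rule tendsto_eventually[OF assms(1)])
    show "\<forall>\<^sub>F (k, n) in at_top \<times>\<^sub>F sequentially. norm (f n k) \<le> M k"
      using assms(2) by (intro always_eventually) auto
  qed (use assms(3) in auto)
  then show ?thesis by simp
qed

lemma Tinf_truncation_tendsto:
  assumes "0 < p" "p < 1" "0 < \<gamma>" "1 \<le> w" "admissible B x"
  shows "(\<lambda>N. Tinf p \<gamma> B w (\<lambda>i. if i \<le> N then x i else 0)) \<longlonglongrightarrow> Tinf p \<gamma> B w x"
proof -
  define z where "z N = (\<lambda>i. if i \<le> N then x i else 0)" for N :: nat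
  have z: "admissible B (z N)" for N
    unfolding z_def by (rule feasibleN_imp_admissible_truncation[OF admissible_imp_feasibleN[OF assms(5)]])
  have "(\<lambda>N. suminf (rate_term p \<gamma> w (z N))) \<longlonglongrightarrow> suminf (rate_term p \<gamma> w x)"
  proof (rule tendsto_suminf_eventually_eq)
    show "eventually (\<lambda>N. rate_term p \<gamma> w (z N) k = rate_term p \<gamma> w x k) sequentially" for k
      using eventually_ge_at_top[of "Suc k"] by eventually_elim (simp add: rate_term_def z_def)
    show "\<bar>rate_term p \<gamma> w (z N) k\<bar> \<le> (1-p)^k * (p*(1-p)^w/2 * log 2 (1+\<gamma>*B))" for N k
      using rate_term_bounds[OF assms(1-3) z] by auto
  qed (use assms in \<open>auto intro!: summable_mult2 summable_geometric\<close>)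
  moreover have "(\<lambda>N. suminf (residual_term p \<gamma> B w (z N))) \<longlonglongrightarrow> suminf (residual_term p \<gamma> B w x)"
  proof (rule tendsto_suminf_eventually_eq)
    show "eventually (\<lambda>N. residual_term p \<gamma> B w (z N) k = residual_term p \<gamma> B w x k) sequentially" for k
      using eventually_ge_at_top[of "Suc k"]
    proof eventually_elim
      case (elim N)
      have "(\<Sum>i=1..Suc k. z N i) = (\<Sum>i=1..Suc k. x i)"
        by (rule sum.cong) (use elim in \<open>auto simp: z_def\<close>)
      then show ?case by (simp add: residual_term_def)
    qed
    show "\<bar>residual_term p \<gamma> B w (z N) k\<bar> \<le> (1-p)^k * (p^2*(1-p)^w*(real w/2) * log 2 (1+\<gamma>*B))" for N k
      using residual_term_bounds[OF assms(1-4) z] by auto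
  qed (use assms in \<open>auto intro!: summable_mult2 summable_geometric\<close>)
  ultimately show ?thesis
    unfolding z_def[symmetric] Tinf_eq_terms by (intro tendsto_add tendsto_const)
qed

lemma tendsto_of_log_square_bound:
  fixes u e :: "nat \<Rightarrow> real"
  assumes "0 < c" "0 < \<kappa>"
    and bound: "eventually (\<lambda>n. c * log 2 (1 + (\<kappa> * (v - u n))^2) \<le> e n) sequentially"
    and "e \<longlonglongrightarrow> 0"
  shows "u \<longlonglongrightarrow> v"
proof (rule tendstoI)
  fix \<epsilon> :: real
  assume "0 < \<epsilon>"
  define \<delta> where "\<delta> = c * log 2 (1 + (\<kappa> * \<epsilon>)^2)"
  have "0 < (\<kappa> * \<epsilon>)^2" using assms(2) \<open>0 < \<epsilon>\<close> by simp
  moreover have "0 < c * log 2 (1 + t)" if "0 < t" for t using assms(1) that by simp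
  ultimately have "0 < \<delta>" unfolding \<delta>_def by blast
  from order_tendstoD(2)[OF assms(4) this] bound
  show "eventually (\<lambda>n. dist (u n) v < \<epsilon>) sequentially"
  proof eventually_elim
    case (elim n)
    show ?case
    proof (rule ccontr)
      assume "\<not> dist (u n) v < \<epsilon>"
      then have "\<kappa> * \<epsilon> \<le> \<bar>\<kappa> * (v - u n)\<bar>"
        using assms(2) by (simp add: dist_real_def abs_mult abs_minus_commute)
      then have "(\<kappa> * \<epsilon>)^2 \<le> (\<kappa> * (v - u n))^2"
        using assms(2) \<open>0 < \<epsilon>\<close> by (metis abs_le_square_iff abs_of_pos mult_pos_pos)
      then have "\<delta> \<le> c * log 2 (1 + (\<kappa> * (v - u n))^2)"
        unfolding \<delta>_def using assms(1) by (intro mult_left_mono log_mono) (auto simp: add_pos_nonneg)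
      with elim show False by linarith
    qed
  qed
qed

theorem lemma9:
  fixes p \<gamma> B :: real and w :: nat
    and \<xi>N :: "nat \<Rightarrow> nat \<Rightarrow> real" and \<xi>s :: "nat \<Rightarrow> real"
  assumes "0 < p" "p < 1" "0 < \<gamma>" "0 < B" "1 \<le> w"
    and maxN: "\<And>N. N \<ge> 1 \<Longrightarrow> feasibleN B N (\<xi>N N) \<and>
          (\<forall>\<eta>. feasibleN B N \<eta> \<longrightarrow> TN p \<gamma> B w N \<eta> \<le> TN p \<gamma> B w N (\<xi>N N))"
    and uniqN: "\<And>N \<eta>. N \<ge> 1 \<Longrightarrow> feasibleN B N \<eta> \<Longrightarrow>
          (\<forall>\<zeta>. feasibleN B N \<zeta> \<longrightarrow> TN p \<gamma> B w N \<zeta> \<le> TN p \<gamma> B w N \<eta>) \<Longrightarrow>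
          (\<forall>j\<in>{1..N}. \<eta> j = \<xi>N N j)"
    and adm: "admissible B \<xi>s"
    and max: "\<And>x. admissible B x \<Longrightarrow> Tinf p \<gamma> B w x \<le> Tinf p \<gamma> B w \<xi>s"
    and uniq: "\<And>x. admissible B x \<Longrightarrow>
          (\<forall>y. admissible B y \<longrightarrow> Tinf p \<gamma> B w y \<le> Tinf p \<gamma> B w x) \<Longrightarrow>
          (\<forall>j\<ge>1. x j = \<xi>s j)"
    and "1 \<le> j"
  shows "(\<lambda>N. \<xi>N N j) \<longlonglongrightarrow> \<xi>s j"
proof -
  define T where "T = Tinf p \<gamma> B w"
  define y where "y N = (\<lambda>i. if i \<le> N then \<xi>N N i else 0)" for N :: nat
  define z where "z N = (\<lambda>i. if i \<le> N then \<xi>s i else 0)" for N :: nat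
  define c where "c = p * (1-p)^(j - 1 + w) * (1/2)"
  define \<kappa> where "\<kappa> = \<gamma> / (2*(1+\<gamma>*B))"
  have gap: "c * log 2 (1 + (\<kappa> * (\<xi>s j - y N j))^2) \<le> T \<xi>s - T (z N)" if "N \<ge> 1" for N
  proof -
    have "admissible B (y N)"
      unfolding y_def using maxN[OF that] by (intro feasibleN_imp_admissible_truncation) auto
    from Tinf_maximizer_gap[OF assms(1-3,5) adm this max, of "j - 1"]
    have "c * log 2 (1 + (\<kappa> * (\<xi>s j - y N j))^2) \<le> T \<xi>s - T (y N)"
      using \<open>1 \<le> j\<close> unfolding c_def \<kappa>_def T_def by (simp add: mult.assoc)
    moreover have "T (z N) \<le> T (y N)"
      using maxN[OF that] admissible_imp_feasibleN[OF adm] unfolding TN_def T_def y_def z_def by blast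
    ultimately show ?thesis by linarith
  qed
  have "(\<lambda>N. T \<xi>s - T (z N)) \<longlonglongrightarrow> T \<xi>s - T \<xi>s"
    using Tinf_truncation_tendsto[OF assms(1-3,5) adm] unfolding T_def z_def
    by (intro tendsto_diff tendsto_const)
  then have truncation_gap: "(\<lambda>N. T \<xi>s - T (z N)) \<longlonglongrightarrow> 0" by simp
  have "0 < c" "0 < \<kappa>" unfolding c_def \<kappa>_def using assms by (auto intro!: divide_pos_pos add_pos_pos)
  then have "(\<lambda>N. y N j) \<longlonglongrightarrow> \<xi>s j"
  proof (rule tendsto_of_log_square_bound[OF _ _ _ truncation_gap])
    show "eventually (\<lambda>N. c * log 2 (1 + (\<kappa> * (\<xi>s j - y N j))^2) \<le> T \<xi>s - T (z N)) sequentially"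
      using eventually_ge_at_top[of 1] by eventually_elim (rule gap)
  qed
  moreover have "eventually (\<lambda>N. y N j = \<xi>N N j) sequentially"
    using eventually_ge_at_top[of j] by eventually_elim (simp add: y_def)
  ultimately show ?thesis by (rule Lim_transform_eventually)
qed

end
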